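(* Let $k=2m+1$, $l=2n+1$ be odd integers. Let $V(k,l)\subset\mathbb C^3(x,y,z)$ be the vanishing set of $S_n(t)S_{m-1}(z)-S_{n-1}(t)S_m(z)$ with $t=\left( xS_m(z)-yS_{m-1}(z) \right)\left( yS_m(z)-xS_{m-1}(z) \right)-z\left(S^2_m(z)+S^2_{m-1}(z)\right)+4S_m(z)S_{m-1}(z)$, and let $U(k,l)\subset\mathbb C^3(u,v,z)$ be the vanishing set of $S_n(t)S_{m-1}(z)-S_{n-1}(t)S_m(z)$ with $t=uv-z\big(S_m^2(z)+S_{m-1}^2(z)\big)+4S_m(z)S_{m-1}(z)$. Then $V(k,l)$ is birational to $U(k,l)$.
   Context: The Chebyshev polynomials $S_j(\omega)$ are defined for all integers $j$ by $S_0=1$, $S_1=\omega$, $S_{j+1}=\omega S_j-S_{j-1}$. (The correspondence is given by the substitution $u=xS_m(z)-yS_{m-1}(z)$, $v=yS_m(z)-xS_{m-1}(z)$.) *)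

theory Defs
  imports Complex_Main
begin

(* Auxiliary: T n w = S_{n-1}(w), with T 0 = 0, T 1 = 1. *)
fun chebT :: "nat \<Rightarrow> complex \<Rightarrow> complex" where
  "chebT 0 w = 0"
| "chebT (Suc 0) w = 1"
| "chebT (Suc (Suc n)) w = w * chebT (Suc n) w - chebT n w"

(* Chebyshev polynomials S_j for all integers j:
   S_0 = 1, S_1 = w, S_{j+1} = w S_j - S_{j-1}. *)
definition chebS :: "int \<Rightarrow> complex \<Rightarrow> complex" where
  "chebS j w = (if j \<ge> -1 then chebT (nat (j + 1)) w else - chebT (nat (- j - 1)) w)"

type_synonym pt3 = "complex \<times> complex \<times> complex"

inductive poly3 :: "(pt3 \<Rightarrow> complex) \<Rightarrow> bool" where
  const: "poly3 (\<lambda>_. c)"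
| coord1: "poly3 (\<lambda>(a,b,c). a)"
| coord2: "poly3 (\<lambda>(a,b,c). b)"
| coord3: "poly3 (\<lambda>(a,b,c). c)"
| add: "poly3 f \<Longrightarrow> poly3 g \<Longrightarrow> poly3 (\<lambda>p. f p + g p)"
| mult: "poly3 f \<Longrightarrow> poly3 g \<Longrightarrow> poly3 (\<lambda>p. f p * g p)"

definition zariski_open_in :: "pt3 set \<Rightarrow> pt3 set \<Rightarrow> bool" where
  "zariski_open_in X A \<longleftrightarrow>
     (\<exists>P. (\<forall>f\<in>P. poly3 f) \<and> A = {p\<in>X. \<exists>f\<in>P. f p \<noteq> 0})"

definition zariski_dense_in :: "pt3 set \<Rightarrow> pt3 set \<Rightarrow> bool" where
  "zariski_dense_in X A \<longleftrightarrow> A \<subseteq> X \<and>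
     (\<forall>f. poly3 f \<longrightarrow> (\<forall>p\<in>A. f p = 0) \<longrightarrow> (\<forall>p\<in>X. f p = 0))"

definition rational_map_on :: "pt3 set \<Rightarrow> (pt3 \<Rightarrow> pt3) \<Rightarrow> bool" where
  "rational_map_on A F \<longleftrightarrow>
     (\<exists>p1 q1 p2 q2 p3 q3. poly3 p1 \<and> poly3 q1 \<and> poly3 p2 \<and> poly3 q2 \<and>
        poly3 p3 \<and> poly3 q3 \<and>
        (\<forall>x\<in>A. q1 x \<noteq> 0 \<and> q2 x \<noteq> 0 \<and> q3 x \<noteq> 0 \<and>
            F x = (p1 x / q1 x, p2 x / q2 x, p3 x / q3 x)))"

definition birational :: "pt3 set \<Rightarrow> pt3 set \<Rightarrow> bool" where
  "birational X Y \<longleftrightarrow>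
     (\<exists>X0 Y0 F G. zariski_open_in X X0 \<and> zariski_dense_in X X0 \<and>
        zariski_open_in Y Y0 \<and> zariski_dense_in Y Y0 \<and>
        rational_map_on X0 F \<and> rational_map_on Y0 G \<and>
        F ` X0 \<subseteq> Y0 \<and> G ` Y0 \<subseteq> X0 \<and>
        (\<forall>x\<in>X0. G (F x) = x) \<and> (\<forall>y\<in>Y0. F (G y) = y))"

definition tV :: "int \<Rightarrow> pt3 \<Rightarrow> complex" where
  "tV m = (\<lambda>(x,y,z). (x * chebS m z - y * chebS (m-1) z) * (y * chebS m z - x * chebS (m-1) z)
      - z * ((chebS m z)^2 + (chebS (m-1) z)^2) + 4 * chebS m z * chebS (m-1) z)"

definition tU :: "int \<Rightarrow> pt3 \<Rightarrow> complex" where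
  "tU m = (\<lambda>(u,v,z). u * v - z * ((chebS m z)^2 + (chebS (m-1) z)^2) + 4 * chebS m z * chebS (m-1) z)"

definition Vkl :: "int \<Rightarrow> int \<Rightarrow> pt3 set" where
  "Vkl m n = {(x,y,z). chebS n (tV m (x,y,z)) * chebS (m-1) z - chebS (n-1) (tV m (x,y,z)) * chebS m z = 0}"

definition Ukl :: "int \<Rightarrow> int \<Rightarrow> pt3 set" where
  "Ukl m n = {(u,v,z). chebS n (tU m (u,v,z)) * chebS (m-1) z - chebS (n-1) (tU m (u,v,z)) * chebS m z = 0}"

end

theory Submission
  imports Defs "HOL-Complex_Analysis.Complex_Analysis"
begin

text \<open>
  The substitution \<open>u = x S\<^sub>m(z) - y S\<^sub>m\<^sub>-\<^sub>1(z)\<close>, \<open>v = y S\<^sub>m(z) - x S\<^sub>m\<^sub>-\<^sub>1(z)\<close> turns the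
  equation of \<open>V(k,l)\<close> into that of \<open>U(k,l)\<close>; it is linear in \<open>(x, y)\<close> with determinant
  \<open>D(z) = S\<^sub>m(z)\<^sup>2 - S\<^sub>m\<^sub>-\<^sub>1(z)\<^sup>2\<close>, hence an isomorphism between the Zariski open parts
  of both varieties over \<open>D(z) \<noteq> 0\<close>. These parts are dense. Since \<open>D(2) = 2m + 1 \<noteq> 0\<close>,
  the zeros of \<open>D\<close> are isolated. Over a zero of \<open>D\<close> we have \<open>S\<^sub>m\<^sub>-\<^sub>1 = \<plusminus>S\<^sub>m \<noteq> 0\<close>,
  so along a suitable line in the slice \<open>z = const\<close> the parameter \<open>t\<close> takes the value 2, where
  the defining equation equals \<open>S\<^sub>m\<close> or \<open>-(2n + 1) S\<^sub>m\<close>. Thus the equation restricted to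
  that line is a nonzero holomorphic function, and by the minimum modulus principle its
  zeros persist when \<open>z\<close> is perturbed off the zeros of \<open>D\<close>. Every point of the variety
  is therefore a Euclidean limit of points with \<open>D(z) \<noteq> 0\<close>, and polynomials are continuous.
\<close>

lemma minimum_modulus_nonvanishing:
  fixes g :: "complex \<Rightarrow> complex"
  assumes "0 < r" "0 < c"
    and hol: "g holomorphic_on ball a r" and cont: "continuous_on (cball a r) g"
    and nz: "\<And>l. l \<in> cball a r \<Longrightarrow> g l \<noteq> 0"
    and bound: "\<And>l. l \<in> sphere a r \<Longrightarrow> c \<le> norm (g l)"
  shows "c \<le> norm (g a)"
proof -
  have "norm (inverse (g a)) \<le> inverse c"
  proof (rule maximum_modulus_frontier[where f = "\<lambda>l. inverse (g l)" and S = "ball a r"])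
    show "(\<lambda>l. inverse (g l)) holomorphic_on interior (ball a r)"
      using hol nz by (auto intro!: holomorphic_intros)
    show "continuous_on (closure (ball a r)) (\<lambda>l. inverse (g l))"
      using \<open>0 < r\<close> cont nz by (auto intro!: continuous_intros)
    fix l assume "l \<in> frontier (ball a r)"
    then have "c \<le> norm (g l)" using \<open>0 < r\<close> bound by simp
    then show "norm (inverse (g l)) \<le> inverse c"
      using \<open>0 < c\<close> by (simp add: norm_inverse le_imp_inverse_le)
  qed (use \<open>0 < r\<close> in auto)
  moreover have "0 < norm (g a)" using nz[of a] \<open>0 < r\<close> by simp
  ultimately show ?thesis using \<open>0 < c\<close> by (simp add: norm_inverse)
qed

lemma holomorphic_zero_persists:
  fixes \<Phi> :: "complex \<times> complex \<Rightarrow> complex"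
  assumes cont: "continuous_on UNIV \<Phi>"
    and hol: "\<And>\<mu>. (\<lambda>l. \<Phi> (\<mu>, l)) holomorphic_on UNIV"
    and "\<Phi> (0, 0) = 0" "\<Phi> (0, l1) \<noteq> 0" "0 < \<epsilon>"
  shows "\<exists>\<delta>>0. \<forall>\<mu>. norm \<mu> < \<delta> \<longrightarrow> (\<exists>l. norm l < \<epsilon> \<and> \<Phi> (\<mu>, l) = 0)"
proof -
  obtain r0 where "0 < r0" and isolated: "\<And>l. l \<in> ball 0 r0 - {0} \<Longrightarrow> \<Phi> (0, l) \<noteq> 0"
    using isolated_zeros[OF hol[of 0], of 0 l1] assms(3,4) by auto
  define r where "r = min (r0 / 2) (\<epsilon> / 2)"
  have "0 < r" "r < \<epsilon>" using \<open>0 < r0\<close> \<open>0 < \<epsilon>\<close> by (auto simp: r_def)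
  have no_zero: "\<Phi> (0, l) \<noteq> 0" if "l \<in> sphere 0 r" for l
    using isolated[of l] that \<open>0 < r0\<close> \<open>0 < r\<close> by (cases "l = 0") (auto simp: r_def)
  have "continuous_on (sphere 0 r) (\<lambda>l. norm (\<Phi> (0, l)))"
    by (intro continuous_intros continuous_on_compose2[OF cont]) auto
  moreover have "sphere (0::complex) r \<noteq> {}" using \<open>0 < r\<close> by simp
  ultimately obtain l0 where "l0 \<in> sphere 0 r"
    and l0_min: "\<And>l. l \<in> sphere 0 r \<Longrightarrow> norm (\<Phi> (0, l0)) \<le> norm (\<Phi> (0, l))"
    using continuous_attains_inf[OF compact_sphere] by blast
  define M where "M = norm (\<Phi> (0, l0))"
  have "0 < M" using no_zero[OF \<open>l0 \<in> sphere 0 r\<close>] by (simp add: M_def)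
  have "uniformly_continuous_on (cball 0 1 \<times> cball 0 r) \<Phi>"
    by (intro compact_uniformly_continuous continuous_on_subset[OF cont] compact_Times) auto
  then obtain d where "0 < d" and d: "\<And>p q. p \<in> cball 0 1 \<times> cball 0 r \<Longrightarrow>
      q \<in> cball 0 1 \<times> cball 0 r \<Longrightarrow> dist q p < d \<Longrightarrow> dist (\<Phi> q) (\<Phi> p) < M / 2"
    unfolding uniformly_continuous_on_def using \<open>0 < M\<close> by (metis half_gt_zero)
  have close: "norm (\<Phi> (\<mu>, l) - \<Phi> (0, l)) < M / 2"
    if "norm \<mu> < min d 1" "l \<in> cball 0 r" for \<mu> l
  proof -
    have "dist (\<Phi> (\<mu>, l)) (\<Phi> (0, l)) < M / 2"
      using that by (intro d) (auto simp: dist_Pair_Pair)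
    then show ?thesis by (simp add: dist_norm)
  qed
  show ?thesis
  proof (intro exI[of _ "min d 1"] conjI allI impI)
    fix \<mu> :: complex assume \<mu>: "norm \<mu> < min d 1"
    show "\<exists>l. norm l < \<epsilon> \<and> \<Phi> (\<mu>, l) = 0"
    proof (rule ccontr)
      assume "\<not> ?thesis"
      then have nz: "\<Phi> (\<mu>, l) \<noteq> 0" if "l \<in> cball 0 r" for l
        using that \<open>r < \<epsilon>\<close> by (metis mem_cball_0 order_le_less_trans)
      have "M / 2 \<le> norm (\<Phi> (\<mu>, 0))"
      proof (rule minimum_modulus_nonvanishing[where g = "\<lambda>l. \<Phi> (\<mu>, l)" and a = 0, OF \<open>0 < r\<close>])
        show "(\<lambda>l. \<Phi> (\<mu>, l)) holomorphic_on ball 0 r"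
          using hol holomorphic_on_subset by blast
        show "continuous_on (cball 0 r) (\<lambda>l. \<Phi> (\<mu>, l))"
          by (intro continuous_on_compose2[OF cont] continuous_intros) auto
        fix l :: complex assume "l \<in> sphere 0 r"
        moreover have "norm (\<Phi> (0, l)) - norm (\<Phi> (\<mu>, l)) \<le> norm (\<Phi> (\<mu>, l) - \<Phi> (0, l))"
          by (metis norm_minus_commute norm_triangle_ineq2)
        ultimately show "M / 2 \<le> norm (\<Phi> (\<mu>, l))"
          using l0_min[of l] close[OF \<mu>, of l] by (simp add: M_def)
      qed (use \<open>0 < M\<close> nz in auto)
      moreover have "norm (\<Phi> (\<mu>, 0)) < M / 2"
        using close[OF \<mu>, of 0] \<open>0 < r\<close> assms(3) by simp
      ultimately show False by simp
    qed
  qed (use \<open>0 < d\<close> in simp)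
qed

lemma zero_approached_off_zeros:
  fixes \<Phi> :: "complex \<times> complex \<Rightarrow> complex" and D :: "complex \<Rightarrow> complex"
  assumes cont: "continuous_on UNIV \<Phi>" and hol: "\<And>\<mu>. (\<lambda>l. \<Phi> (\<mu>, l)) holomorphic_on UNIV"
    and "\<Phi> (0, 0) = 0" "\<Phi> (0, w) \<noteq> 0"
    and "D holomorphic_on UNIV" "D 0 = 0" "D \<nu> \<noteq> 0"
  shows "(0, 0) \<in> closure {q. \<Phi> q = 0 \<and> D (fst q) \<noteq> 0}"
  unfolding closure_approachable
proof (intro allI impI)
  fix \<epsilon> :: real assume "0 < \<epsilon>"
  obtain \<delta> where "0 < \<delta>" and \<delta>: "\<And>\<mu>. norm \<mu> < \<delta> \<Longrightarrow> \<exists>l. norm l < \<epsilon> / 2 \<and> \<Phi> (\<mu>, l) = 0"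
    using holomorphic_zero_persists[OF cont hol assms(3,4), of "\<epsilon> / 2"] \<open>0 < \<epsilon>\<close> by auto
  obtain r where "0 < r" and isolated: "\<And>\<mu>. \<mu> \<in> ball 0 r - {0} \<Longrightarrow> D \<mu> \<noteq> 0"
    using isolated_zeros[OF assms(5), of 0 \<nu>] assms(6,7) by auto
  define \<mu> :: complex where "\<mu> = of_real (min (min \<delta> (\<epsilon> / 2)) r / 2)"
  have "norm \<mu> < \<delta>" "norm \<mu> < \<epsilon> / 2" "norm \<mu> < r" "\<mu> \<noteq> 0"
    using \<open>0 < \<delta>\<close> \<open>0 < \<epsilon>\<close> \<open>0 < r\<close> by (auto simp: \<mu>_def)
  then obtain l where "norm l < \<epsilon> / 2" "\<Phi> (\<mu>, l) = 0" "D \<mu> \<noteq> 0"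
    using \<delta> isolated[of \<mu>] by auto
  moreover have "dist (\<mu>, l) (0, 0) < \<epsilon>"
    using norm_Pair_le[of \<mu> l] \<open>norm l < \<epsilon> / 2\<close> \<open>norm \<mu> < \<epsilon> / 2\<close> by (simp add: dist_norm)
  ultimately show "\<exists>q\<in>{q. \<Phi> q = 0 \<and> D (fst q) \<noteq> 0}. dist q (0, 0) < \<epsilon>" by auto
qed

lemma poly3_case_prod: "poly3 (\<lambda>p. f (fst p) (fst (snd p)) (snd (snd p))) \<Longrightarrow> poly3 (\<lambda>(x, y, z). f x y z)"
  by (simp add: case_prod_beta')

lemma poly3_fst: "poly3 (\<lambda>p. fst p)"
  using poly3.coord1 by (simp add: case_prod_beta')

lemma poly3_fst_snd: "poly3 (\<lambda>p. fst (snd p))"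
  using poly3.coord2 by (simp add: case_prod_beta')

lemma poly3_snd_snd: "poly3 (\<lambda>p. snd (snd p))"
  using poly3.coord3 by (simp add: case_prod_beta')

lemma poly3_diff: "poly3 f \<Longrightarrow> poly3 g \<Longrightarrow> poly3 (\<lambda>p. f p - g p)"
  using poly3.add[of f "\<lambda>p. (-1) * g p"] poly3.mult[OF poly3.const[of "-1"], of g] by simp

lemma poly3_compose:
  assumes "poly3 f" "poly3 g1" "poly3 g2" "poly3 g3"
  shows "poly3 (\<lambda>p. f (g1 p, g2 p, g3 p))"
  using assms(1) by induction (auto intro: assms(2-4) poly3.intros)

lemma poly3_continuous: "poly3 f \<Longrightarrow> continuous_on UNIV f"
  by (induction rule: poly3.induct) (auto simp: case_prod_beta' intro!: continuous_intros)

lemma poly3_holomorphic_on_line: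
  "poly3 f \<Longrightarrow> (\<lambda>l. f (x + l * e1, y + l * e2, z + l * e3)) holomorphic_on UNIV"
  by (induction rule: poly3.induct) (auto intro!: holomorphic_intros)

lemma zariski_open_in_nonzero: "poly3 g \<Longrightarrow> zariski_open_in X {p \<in> X. g p \<noteq> 0}"
  unfolding zariski_open_in_def by (rule exI[of _ "{g}"]) auto

lemma zariski_dense_in_if_closure:
  assumes "A \<subseteq> X" "X \<subseteq> closure A"
  shows "zariski_dense_in X A"
  unfolding zariski_dense_in_def
proof (intro conjI allI impI ballI)
  fix f p assume "poly3 f" "\<forall>p\<in>A. f p = 0" "p \<in> X"
  then have "closure A \<subseteq> {p. f p = 0}"
    by (intro closure_minimal closed_Collect_eq poly3_continuous continuous_on_const) auto
  then show "f p = 0" using \<open>p \<in> X\<close> assms(2) by auto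
qed (use assms(1) in auto)

lemma poly3_zero_in_closure_off_zeros:
  fixes \<psi> :: "pt3 \<Rightarrow> complex" and D :: "complex \<Rightarrow> complex"
  assumes "poly3 \<psi>" "\<psi> (x, y, z) = 0" "\<psi> (x + l1 * e1, y + l1 * e2, z) \<noteq> 0"
    and "D holomorphic_on UNIV" "D z = 0" "D z1 \<noteq> 0"
  shows "(x, y, z) \<in> closure {p. \<psi> p = 0 \<and> D (snd (snd p)) \<noteq> 0}"
proof -
  define h where "h = (\<lambda>(\<mu>, l). (x + l * e1, y + l * e2, z + \<mu>))"
  have "(0, 0) \<in> closure {q. \<psi> (h q) = 0 \<and> D (z + fst q) \<noteq> 0}"
  proof (rule zero_approached_off_zeros[where w = l1 and \<nu> = "z1 - z"])
    show "continuous_on UNIV (\<lambda>q. \<psi> (h q))"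
      unfolding h_def case_prod_beta'
      by (intro continuous_on_compose2[OF poly3_continuous[OF \<open>poly3 \<psi>\<close>]] continuous_intros) auto
    show "(\<lambda>l. \<psi> (h (\<mu>, l))) holomorphic_on UNIV" for \<mu>
      using poly3_holomorphic_on_line[OF \<open>poly3 \<psi>\<close>, of x e1 y e2 "z + \<mu>" 0] by (simp add: h_def)
    show "(\<lambda>\<mu>. D (z + \<mu>)) holomorphic_on UNIV"
      using holomorphic_on_compose_gen[OF holomorphic_on_add[OF holomorphic_on_const holomorphic_on_id] assms(4)]
      by (simp add: o_def)
  qed (use assms(2,3,5,6) in \<open>auto simp: h_def\<close>)
  moreover have "continuous_on UNIV h"
    unfolding h_def case_prod_beta' by (intro continuous_intros)
  ultimately have "h (0, 0) \<in> closure (h ` {q. \<psi> (h q) = 0 \<and> D (z + fst q) \<noteq> 0})"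
    using continuous_image_closure_subset[of UNIV h] by blast
  moreover have "h ` {q. \<psi> (h q) = 0 \<and> D (z + fst q) \<noteq> 0} \<subseteq> {p. \<psi> p = 0 \<and> D (snd (snd p)) \<noteq> 0}"
    by (auto simp: h_def)
  ultimately show ?thesis by (auto simp: h_def dest: closure_mono)
qed

lemma zariski_dense_in_off_zeros:
  fixes \<psi> :: "pt3 \<Rightarrow> complex" and D :: "complex \<Rightarrow> complex"
  assumes X: "X = {p. \<psi> p = 0}" and "poly3 \<psi>"
    and "D holomorphic_on UNIV" "D z1 \<noteq> 0"
    and line: "\<And>x y z. \<psi> (x, y, z) = 0 \<Longrightarrow> D z = 0 \<Longrightarrow> \<exists>e1 e2 l. \<psi> (x + l * e1, y + l * e2, z) \<noteq> 0"
  shows "zariski_dense_in X {p \<in> X. D (snd (snd p)) \<noteq> 0}"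
proof (rule zariski_dense_in_if_closure)
  show "X \<subseteq> closure {p \<in> X. D (snd (snd p)) \<noteq> 0}"
  proof
    fix p assume "p \<in> X"
    obtain x y z where p: "p = (x, y, z)" by (metis prod_cases3)
    show "p \<in> closure {p \<in> X. D (snd (snd p)) \<noteq> 0}"
    proof (cases "D z = 0")
      case True
      with \<open>p \<in> X\<close> obtain e1 e2 l where "\<psi> (x + l * e1, y + l * e2, z) \<noteq> 0"
        using line X p by blast
      then show ?thesis
        using poly3_zero_in_closure_off_zeros[OF \<open>poly3 \<psi>\<close>] True \<open>p \<in> X\<close> assms(3,4) X p by auto
    next
      case False
      then show ?thesis using \<open>p \<in> X\<close> p closure_subset by fastforce
    qed
  qed
qed auto

lemma chebT_consecutive_nonzero: "chebT k w \<noteq> 0 \<or> chebT (Suc k) w \<noteq> 0"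
  by (induction k) auto

lemma chebT_two: "chebT k 2 = of_nat k"
proof -
  have "chebT k 2 = of_nat k \<and> chebT (Suc k) 2 = of_nat (Suc k)"
    by (induction k) (auto simp: algebra_simps)
  then show ?thesis by simp
qed

lemma chebS_two: "chebS j 2 = of_int (j + 1)"
  by (auto simp: chebS_def chebT_two)

lemma chebS_reflect: "chebS (- j - 2) w = - chebS j w"
proof -
  have "- j - 2 + 1 = - j - 1" "- (- j - 2) - 1 = j + 1" by simp_all
  then show ?thesis unfolding chebS_def by (simp only:) auto
qed

lemma chebS_consecutive_nonzero: "chebS m w \<noteq> 0 \<or> chebS (m - 1) w \<noteq> 0"
proof -
  have nonneg: "chebS k w \<noteq> 0 \<or> chebS (k - 1) w \<noteq> 0" if "k \<ge> 0" for k
    using chebT_consecutive_nonzero[of "nat k" w] that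
    by (auto simp: chebS_def nat_add_distrib)
  show ?thesis
  proof (cases "m \<ge> 0")
    case False
    have "- (m - 1) - 2 = - m - 1" "- m - 2 = - m - 1 - 1" by simp_all
    then show ?thesis
      using nonneg[of "- m - 1"] False chebS_reflect[of "m - 1" w] chebS_reflect[of m w]
      by (simp only:) auto
  qed (use nonneg in blast)
qed

lemma chebS_holomorphic: "chebS j holomorphic_on UNIV"
proof -
  have "chebT k holomorphic_on UNIV \<and> chebT (Suc k) holomorphic_on UNIV" for k
    by (induction k) (auto intro!: holomorphic_intros)
  then show ?thesis
    by (cases "-1 \<le> j") (auto simp: chebS_def[abs_def] intro!: holomorphic_intros)
qed

lemma poly3_chebS: "poly3 f \<Longrightarrow> poly3 (\<lambda>p. chebS j (f p))"
proof -
  assume "poly3 f"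
  then have "poly3 (\<lambda>p. chebT k (f p)) \<and> poly3 (\<lambda>p. chebT (Suc k) (f p))" for k
    by (induction k) (auto intro!: poly3_diff poly3.intros)
  then show ?thesis
    unfolding chebS_def using poly3.mult[OF poly3.const[of "-1"]] by (cases "j \<ge> -1") auto
qed

lemma quadratic_has_root:
  fixes a b c :: complex
  assumes "a \<noteq> 0"
  shows "\<exists>x. a * x^2 + b * x + c = 0"
proof -
  define s where "s = csqrt (b^2 - 4 * a * c)"
  have "a * ((s - b) / (2 * a))^2 + b * ((s - b) / (2 * a)) + c = (s^2 - b^2 + 4 * a * c) / (4 * a)"
    using assms by (simp add: field_simps power2_eq_square)
  also have "\<dots> = 0" by (simp add: s_def)
  finally show ?thesis by blast
qed

definition chebD :: "int \<Rightarrow> complex \<Rightarrow> complex" where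
  "chebD m z = (chebS m z)^2 - (chebS (m - 1) z)^2"

lemma chebD_holomorphic: "chebD m holomorphic_on UNIV"
  using chebS_holomorphic
  by (auto simp: chebD_def[abs_def] intro!: holomorphic_intros)

lemma poly3_chebD: "poly3 (\<lambda>p. chebD m (snd (snd p)))"
  unfolding chebD_def power2_eq_square
  by (intro poly3_diff poly3.mult poly3_chebS poly3_snd_snd)

lemma chebD_two: "chebD m 2 \<noteq> 0"
proof -
  have "chebD m 2 = of_int (2 * m + 1)"
    by (simp add: chebD_def chebS_two algebra_simps power2_eq_square)
  moreover have "2 * m + 1 \<noteq> 0" by presburger
  ultimately show ?thesis by (simp only: of_int_eq_0_iff not_False_eq_True)
qed

lemma chebD_eq_0:
  assumes "chebD m z = 0"
  shows "chebS m z \<noteq> 0" "chebS (m - 1) z = chebS m z \<or> chebS (m - 1) z = - chebS m z"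
proof -
  have "(chebS m z - chebS (m - 1) z) * (chebS m z + chebS (m - 1) z) = 0"
    using assms by (simp add: chebD_def algebra_simps power2_eq_square)
  then show "chebS (m - 1) z = chebS m z \<or> chebS (m - 1) z = - chebS m z"
    by (auto simp: add_eq_0_iff)
  then show "chebS m z \<noteq> 0" using chebS_consecutive_nonzero[of m z] by auto
qed

definition Ukl_eqn :: "int \<Rightarrow> int \<Rightarrow> pt3 \<Rightarrow> complex" where
  "Ukl_eqn m n p = chebS n (tU m p) * chebS (m - 1) (snd (snd p)) - chebS (n - 1) (tU m p) * chebS m (snd (snd p))"

lemma Ukl_eq: "Ukl m n = {p. Ukl_eqn m n p = 0}"
  by (auto simp: Ukl_def Ukl_eqn_def)

lemma poly3_Ukl_eqn: "poly3 (Ukl_eqn m n)"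
proof -
  have "poly3 (tU m)"
    unfolding tU_def power2_eq_square
    by (intro poly3_case_prod poly3_diff poly3.add poly3.mult poly3_chebS poly3_fst poly3_fst_snd poly3_snd_snd poly3.const)
  then show ?thesis
    unfolding Ukl_eqn_def[abs_def]
    by (intro poly3_diff poly3.mult poly3_chebS poly3_snd_snd)
qed

lemma Ukl_eqn_nonzero_at_two:
  assumes "chebD m (snd (snd p)) = 0" "tU m p = 2"
  shows "Ukl_eqn m n p \<noteq> 0"
proof -
  let ?a = "chebS m (snd (snd p))" and ?b = "chebS (m - 1) (snd (snd p))"
  have eqn: "Ukl_eqn m n p = of_int (n + 1) * ?b - of_int n * ?a"
    using assms(2) by (simp add: Ukl_eqn_def chebS_two)
  have "?a \<noteq> 0" using chebD_eq_0(1)[OF assms(1)] .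
  from chebD_eq_0(2)[OF assms(1)] show ?thesis
  proof
    assume "?b = ?a"
    then show ?thesis using eqn \<open>?a \<noteq> 0\<close> by (simp add: algebra_simps)
  next
    assume "?b = - ?a"
    then have "Ukl_eqn m n p = - (of_int (2 * n + 1) * ?a)"
      using eqn by (simp add: algebra_simps)
    moreover have "(of_int (2 * n + 1) :: complex) \<noteq> 0"
      by (simp only: of_int_eq_0_iff) presburger
    ultimately show ?thesis using \<open>?a \<noteq> 0\<close> by simp
  qed
qed

lemma tU_attains_on_line:
  assumes "\<alpha> * \<beta> \<noteq> 0"
  shows "\<exists>l. tU m (u + l * \<alpha>, v + l * \<beta>, z) = w"
proof -
  define c where "c = z * ((chebS m z)^2 + (chebS (m - 1) z)^2) - 4 * chebS m z * chebS (m - 1) z"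
  obtain l where "(\<alpha> * \<beta>) * l^2 + (u * \<beta> + v * \<alpha>) * l + (u * v - c - w) = 0"
    using quadratic_has_root[OF assms] by blast
  moreover have "tU m (u + l * \<alpha>, v + l * \<beta>, z) - w = (\<alpha> * \<beta>) * l^2 + (u * \<beta> + v * \<alpha>) * l + (u * v - c - w)"
    by (simp add: tU_def c_def algebra_simps power2_eq_square)
  ultimately show ?thesis by auto
qed

lemma rational_map_onI:
  assumes "poly3 f1" "poly3 f2" "poly3 f3" "poly3 q"
    and "\<And>p. p \<in> A \<Longrightarrow> q p \<noteq> 0 \<and> F p = (f1 p / q p, f2 p / q p, f3 p / q p)"
  shows "rational_map_on A F"
  unfolding rational_map_on_def using assms by blast

definition to_uvz :: "int \<Rightarrow> pt3 \<Rightarrow> pt3" where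
  "to_uvz m = (\<lambda>(x, y, z). (x * chebS m z - y * chebS (m - 1) z, y * chebS m z - x * chebS (m - 1) z, z))"

definition to_xyz :: "int \<Rightarrow> pt3 \<Rightarrow> pt3" where
  "to_xyz m = (\<lambda>(u, v, z). ((chebS m z * u + chebS (m - 1) z * v) / chebD m z,
                            (chebS (m - 1) z * u + chebS m z * v) / chebD m z, z))"

lemma snd_snd_to_uvz [simp]: "snd (snd (to_uvz m p)) = snd (snd p)"
  by (simp add: to_uvz_def split_beta)

lemma snd_snd_to_xyz [simp]: "snd (snd (to_xyz m p)) = snd (snd p)"
  by (simp add: to_xyz_def split_beta)

lemma to_xyz_to_uvz: "chebD m (snd (snd p)) \<noteq> 0 \<Longrightarrow> to_xyz m (to_uvz m p) = p"
  by (cases p) (simp add: to_uvz_def to_xyz_def chebD_def divide_simps, simp add: algebra_simps power2_eq_square)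

lemma to_uvz_to_xyz: "chebD m (snd (snd p)) \<noteq> 0 \<Longrightarrow> to_uvz m (to_xyz m p) = p"
  by (cases p) (simp add: to_uvz_def to_xyz_def chebD_def divide_simps, simp add: algebra_simps power2_eq_square)

lemma Vkl_eq: "Vkl m n = to_uvz m -` Ukl m n"
  by (auto simp: Vkl_def Ukl_def tV_def tU_def to_uvz_def)

lemma poly3_to_uvz: "poly3 (\<lambda>p. fst (to_uvz m p))" "poly3 (\<lambda>p. fst (snd (to_uvz m p)))"
proof -
  have "poly3 (\<lambda>p. fst p * chebS m (snd (snd p)) - fst (snd p) * chebS (m - 1) (snd (snd p)))"
       "poly3 (\<lambda>p. fst (snd p) * chebS m (snd (snd p)) - fst p * chebS (m - 1) (snd (snd p)))"
    by (intro poly3_diff poly3.mult poly3_chebS poly3_fst poly3_fst_snd poly3_snd_snd)+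
  then show "poly3 (\<lambda>p. fst (to_uvz m p))" "poly3 (\<lambda>p. fst (snd (to_uvz m p)))"
    by (simp_all add: to_uvz_def split_beta)
qed

lemma poly3_compose_to_uvz:
  assumes "poly3 f"
  shows "poly3 (\<lambda>p. f (to_uvz m p))"
proof -
  have "(\<lambda>p. f (to_uvz m p)) = (\<lambda>p. f (fst (to_uvz m p), fst (snd (to_uvz m p)), snd (snd p)))"
    by (rule ext) (metis prod.collapse snd_snd_to_uvz)
  then show ?thesis
    using poly3_compose[OF assms poly3_to_uvz[of m] poly3_snd_snd] by (simp only:)
qed

lemma rational_map_on_to_uvz: "rational_map_on A (to_uvz m)"
  by (rule rational_map_onI[OF poly3_to_uvz poly3_snd_snd poly3.const[of 1]]) (simp add: prod_eq_iff)

lemma rational_map_on_to_xyz: "rational_map_on {p \<in> Y. chebD m (snd (snd p)) \<noteq> 0} (to_xyz m)"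
proof -
  have "poly3 (\<lambda>p. chebS m (snd (snd p)) * fst p + chebS (m - 1) (snd (snd p)) * fst (snd p))"
       "poly3 (\<lambda>p. chebS (m - 1) (snd (snd p)) * fst p + chebS m (snd (snd p)) * fst (snd p))"
       "poly3 (\<lambda>p. snd (snd p) * chebD m (snd (snd p)))"
    by (intro poly3.add poly3.mult poly3_chebS poly3_chebD poly3_fst poly3_fst_snd poly3_snd_snd)+
  then show ?thesis
    by (rule rational_map_onI[OF _ _ _ poly3_chebD[of m]]) (auto simp: to_xyz_def split_beta)
qed

lemma zariski_dense_Ukl: "zariski_dense_in (Ukl m n) {p \<in> Ukl m n. chebD m (snd (snd p)) \<noteq> 0}"
proof (rule zariski_dense_in_off_zeros[OF Ukl_eq poly3_Ukl_eqn chebD_holomorphic chebD_two])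
  fix u v z assume "chebD m z = 0"
  obtain l where "tU m (u + l * 1, v + l * 1, z) = 2"
    using tU_attains_on_line[of 1 1] by fastforce
  then have "Ukl_eqn m n (u + l * 1, v + l * 1, z) \<noteq> 0"
    using Ukl_eqn_nonzero_at_two[of m "(u + l * 1, v + l * 1, z)"] \<open>chebD m z = 0\<close> by simp
  then show "\<exists>e1 e2 l. Ukl_eqn m n (u + l * e1, v + l * e2, z) \<noteq> 0" by blast
qed

lemma zariski_dense_Vkl: "zariski_dense_in (Vkl m n) {p \<in> Vkl m n. chebD m (snd (snd p)) \<noteq> 0}"
proof (rule zariski_dense_in_off_zeros[where \<psi> = "\<lambda>p. Ukl_eqn m n (to_uvz m p)",
      OF _ _ chebD_holomorphic chebD_two])
  show "Vkl m n = {p. Ukl_eqn m n (to_uvz m p) = 0}"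
    by (auto simp: Vkl_eq Ukl_eq)
  show "poly3 (\<lambda>p. Ukl_eqn m n (to_uvz m p))"
    by (intro poly3_compose_to_uvz poly3_Ukl_eqn)
  fix x y z assume "chebD m z = 0"
  let ?a = "chebS m z" and ?b = "chebS (m - 1) z"
  obtain u v where uv: "to_uvz m (x, y, z) = (u, v, z)" by (simp add: to_uvz_def)
  have shift: "to_uvz m (x + l * 1, y + l * 0, z) = (u + l * ?a, v + l * - ?b, z)" for l
    using uv by (auto simp: to_uvz_def algebra_simps)
  have "?a * - ?b \<noteq> 0"
    using chebD_eq_0[OF \<open>chebD m z = 0\<close>] by auto
  then obtain l where "tU m (u + l * ?a, v + l * - ?b, z) = 2"
    using tU_attains_on_line by blast
  then have "Ukl_eqn m n (u + l * ?a, v + l * - ?b, z) \<noteq> 0"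
    using \<open>chebD m z = 0\<close> by (intro Ukl_eqn_nonzero_at_two) simp_all
  then have "Ukl_eqn m n (to_uvz m (x + l * 1, y + l * 0, z)) \<noteq> 0"
    by (simp only: shift not_False_eq_True)
  then show "\<exists>e1 e2 l. Ukl_eqn m n (to_uvz m (x + l * e1, y + l * e2, z)) \<noteq> 0" by blast
qed

theorem proposition4p4:
  fixes m n :: int
  shows "birational (Vkl m n) (Ukl m n)"
proof -
  define X0 where "X0 = {p \<in> Vkl m n. chebD m (snd (snd p)) \<noteq> 0}"
  define Y0 where "Y0 = {p \<in> Ukl m n. chebD m (snd (snd p)) \<noteq> 0}"
  have "to_uvz m ` X0 \<subseteq> Y0"
    by (auto simp: X0_def Y0_def Vkl_eq)
  moreover have "to_xyz m ` Y0 \<subseteq> X0"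
    by (auto simp: X0_def Y0_def Vkl_eq to_uvz_to_xyz)
  moreover have "\<forall>p\<in>X0. to_xyz m (to_uvz m p) = p" "\<forall>p\<in>Y0. to_uvz m (to_xyz m p) = p"
    by (auto simp: X0_def Y0_def to_xyz_to_uvz to_uvz_to_xyz)
  moreover have "zariski_open_in (Vkl m n) X0" "zariski_open_in (Ukl m n) Y0"
    unfolding X0_def Y0_def by (intro zariski_open_in_nonzero poly3_chebD)+
  moreover have "zariski_dense_in (Vkl m n) X0" "zariski_dense_in (Ukl m n) Y0"
    unfolding X0_def Y0_def by (rule zariski_dense_Vkl, rule zariski_dense_Ukl)
  moreover have "rational_map_on X0 (to_uvz m)" "rational_map_on Y0 (to_xyz m)"
    unfolding Y0_def by (rule rational_map_on_to_uvz, rule rational_map_on_to_xyz)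
  ultimately show ?thesis
    unfolding birational_def by blast
qed

end
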